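(* Consider a draft tree generated by Greedy sampling with the acceptance probabilities produced by the UniVer Allocation Phase (defined in the context). Then the tree is locally lossless: for every non-leaf node $v$ and every $t\in\Sigma$, $$\mathbb{E}_{\mathcal{C}(v)}\big[p_v(t)\big]=\tilde p_v\,\mathcal{M}_b(t\mid v),$$ where the expectation is over the randomness of generating the children set $\mathcal{C}(v)$ (i.e. over $u_m\sim\mathcal{M}_s^\neg(\cdot\mid v)$), with $v$ and $\tilde p_v$ fixed.
   Context: Let $\Sigma$ be a finite vocabulary; $\mathcal{M}_b(\cdot\mid x)$ (target) and $\mathcal{M}_s(\cdot\mid x)$ (draft) are conditional distributions on $\Sigma$ for every context $x$. $[x]_+=\max\{x,0\}$. Draft tree: fixed rooted topology (root $r$, representing the current context); each non-root node carries a token and is identified with the token sequence on the path from $r$; $\mathcal{M}_b(\cdot\mid v),\mathcal{M}_s(\cdot\mid v)$ condition on that sequence. Greedy sampling, top-down: a non-leaf $v$ with $m$ children has children $\mathcal{C}(v)=\{u_1,\dots,u_m\}$, where $u_1,\dots,u_{m-1}$ are the $m-1$ most probable tokens under $\mathcal{M}_s(\cdot\mid v)$ (set $H_v$, ties broken by a fixed rule) and $u_m\sim\mathcal{M}_s^\neg(\cdot\mid v)$, with $\mathcal{M}_s^\neg(x\mid v)=\mathcal{M}_s(x\mid v)/\sum_{y\notin H_v}\mathcal{M}_s(y\mid v)$ for $x\notin H_v$ and $0$ for $x\in H_v$. UniVer Allocation Phase: $\tilde p_r=1$; top-down, for each non-leaf $v$ with computed $\tilde p_v\in[0,1]$: $Z_v=1-\tilde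 p_v+\sum_{x\in\Sigma}[\tilde p_v\mathcal{M}_b(x\mid v)-\mathcal{M}_s^\neg(x\mid v)]_+$; $p_v(u_m)=\min\{1,\tilde p_v\mathcal{M}_b(u_m\mid v)/\mathcal{M}_s^\neg(u_m\mid v)\}$; for every $u\in\Sigma\setminus\{u_m\}$, $p_v(u)=[\tilde p_v\mathcal{M}_b(u\mid v)-\mathcal{M}_s^\neg(u\mid v)]_+(1-p_v(u_m))/Z_v$; then $\tilde p_{u_j}=p_v(u_j)/(1-\sum_{i<j}p_v(u_i))$ for $j=1,\dots,m$. *)

theory Defs
  imports Complex_Main
begin

definition pos_part :: "real \<Rightarrow> real" where
  "pos_part x = max x 0"

definition is_dist :: "('a::finite \<Rightarrow> real) \<Rightarrow> bool" where
  "is_dist P \<longleftrightarrow> (\<forall>x. 0 \<le> P x) \<and> (\<Sum>x\<in>UNIV. P x) = 1"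

text \<open>H is a set of k most probable tokens under P (any fixed tie-breaking rule
  yields such a set).\<close>
definition top_set :: "('a::finite \<Rightarrow> real) \<Rightarrow> nat \<Rightarrow> 'a set \<Rightarrow> bool" where
  "top_set P k H \<longleftrightarrow> card H = k \<and> (\<forall>x\<in>H. \<forall>y. y \<notin> H \<longrightarrow> P y \<le> P x)"

definition Ms_neg :: "('a::finite \<Rightarrow> real) \<Rightarrow> 'a set \<Rightarrow> 'a \<Rightarrow> real" where
  "Ms_neg P H x = (if x \<in> H then 0 else P x / (\<Sum>y\<in>-H. P y))"

text \<open>Normaliser Z_v, with q = M_b(.|v), r = M_s^neg(.|v), pt = tilde p_v.\<close>
definition univer_Z :: "real \<Rightarrow> ('a::finite \<Rightarrow> real) \<Rightarrow> ('a \<Rightarrow> real) \<Rightarrow> real" where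
  "univer_Z pt q r = 1 - pt + (\<Sum>x\<in>UNIV. pos_part (pt * q x - r x))"

text \<open>UniVer acceptance probability p_v(u) given the sampled last child u_m = um.\<close>
definition univer_p :: "real \<Rightarrow> ('a::finite \<Rightarrow> real) \<Rightarrow> ('a \<Rightarrow> real) \<Rightarrow> 'a \<Rightarrow> 'a \<Rightarrow> real" where
  "univer_p pt q r um u =
     (let pum = min 1 (pt * q um / r um)
      in if u = um then pum
         else pos_part (pt * q u - r u) * (1 - pum) / univer_Z pt q r)"

end

theory Submission
  imports Defs
begin

text \<open>Write \<open>r\<close> for the residual draft distribution and \<open>q\<close> for the target.
  Drawing the last child \<open>u\<close> from \<open>r\<close> and accepting it with probability
  \<open>min 1 (pt q u / r u)\<close> contributes \<open>min (r t) (pt q t) = pt q t - [pt q t - r t]\<^sub>+\<close>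
  to the mass at \<open>t\<close>. The rejection mass \<open>[r u - pt q u]\<^sub>+\<close> summed over \<open>u\<close> equals the
  normaliser \<open>Z\<close>, so redistributing it proportionally to \<open>[pt q t - r t]\<^sub>+ / Z\<close>
  restores exactly the missing excess; the term with \<open>u = t\<close> does not disturb this
  because excess and deficit at \<open>t\<close> are never both positive.\<close>

lemma pos_part_diff_sub_pos_part_diff: "pos_part (a - b) - pos_part (b - a) = a - b"
  by (simp add: pos_part_def)

lemma pos_part_diff_mult_pos_part_diff: "pos_part (a - b) * pos_part (b - a) = 0"
  by (simp add: pos_part_def max_def)

lemma mult_min_one_divide:
  fixes r s :: real
  assumes "0 \<le> r" "0 \<le> s"
  shows "r * min 1 (s / r) = min r s"
proof (cases "r = 0")
  case False
  then have "r > 0" using assms(1) by simp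
  then show ?thesis by (simp add: min_def divide_le_eq)
qed (use assms in simp)

lemma mult_min_one_divide_eq_sub_pos_part:
  fixes r s :: real
  assumes "0 \<le> r" "0 \<le> s"
  shows "r * min 1 (s / r) = s - pos_part (s - r)"
  using mult_min_one_divide[OF assms] by (simp add: pos_part_def min_def)

lemma mult_one_sub_min_one_divide:
  fixes r s :: real
  assumes "0 \<le> r" "0 \<le> s"
  shows "r * (1 - min 1 (s / r)) = pos_part (r - s)"
  using mult_min_one_divide[OF assms] by (simp add: right_diff_distrib pos_part_def min_def)

lemma sum_pos_part_deficit_eq_univer_Z:
  assumes "is_dist q" "is_dist r"
  shows "(\<Sum>x\<in>UNIV. pos_part (r x - pt * q x)) = univer_Z pt q r"
proof -
  have "(\<Sum>x\<in>UNIV. pos_part (r x - pt * q x)) - (\<Sum>x\<in>UNIV. pos_part (pt * q x - r x))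
      = (\<Sum>x\<in>UNIV. r x) - pt * (\<Sum>x\<in>UNIV. q x)"
    by (simp add: pos_part_diff_sub_pos_part_diff sum_subtractf[symmetric] sum_distrib_left)
  then show ?thesis
    using assms by (simp add: is_dist_def univer_Z_def)
qed

lemma pos_part_excess_le_univer_Z:
  assumes "pt \<le> 1"
  shows "pos_part (pt * q t - r t) \<le> univer_Z pt q r"
proof -
  have "pos_part (pt * q t - r t) \<le> (\<Sum>x\<in>UNIV. pos_part (pt * q x - r x))"
    by (rule member_le_sum) (auto simp: pos_part_def)
  then show ?thesis
    using assms by (simp add: univer_Z_def)
qed

lemma univer_p_lossless:
  assumes q: "is_dist q" and r: "is_dist r" and "0 \<le> pt" "pt \<le> 1"
  shows "(\<Sum>u\<in>UNIV. r u * univer_p pt q r u t) = pt * q t"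
proof -
  define Z where "Z = univer_Z pt q r"
  define excess where "excess = pos_part (pt * q t - r t)"
  define deficit where "deficit u = pos_part (r u - pt * q u)" for u
  have nonneg: "0 \<le> r u" "0 \<le> pt * q u" for u
    using q r \<open>0 \<le> pt\<close> by (simp_all add: is_dist_def)
  have accept_t: "r t * univer_p pt q r t t = pt * q t - excess"
    using mult_min_one_divide_eq_sub_pos_part[OF nonneg]
    by (simp add: univer_p_def excess_def)
  have reject: "r u * univer_p pt q r u t = excess / Z * deficit u" if "u \<noteq> t" for u
    using that mult_one_sub_min_one_divide[OF nonneg, of u]
    by (simp add: univer_p_def Let_def Z_def excess_def deficit_def)
  have redistributed: "excess / Z * (Z - deficit t) = excess"
  proof -
    have "excess * deficit t = 0"
      by (simp add: excess_def deficit_def pos_part_diff_mult_pos_part_diff)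
    moreover have "Z = 0 \<Longrightarrow> excess = 0"
      using pos_part_excess_le_univer_Z[OF \<open>pt \<le> 1\<close>, of q t r]
      by (simp add: Z_def excess_def pos_part_def)
    ultimately show ?thesis
      by (cases "Z = 0") (simp_all add: right_diff_distrib)
  qed
  have "(\<Sum>u\<in>UNIV. r u * univer_p pt q r u t)
      = r t * univer_p pt q r t t + (\<Sum>u\<in>UNIV - {t}. r u * univer_p pt q r u t)"
    by (simp add: sum.remove)
  also have "(\<Sum>u\<in>UNIV - {t}. r u * univer_p pt q r u t) = excess / Z * (\<Sum>u\<in>UNIV - {t}. deficit u)"
    by (simp add: reject sum_distrib_left)
  also have "(\<Sum>u\<in>UNIV - {t}. deficit u) = Z - deficit t"
    using sum_pos_part_deficit_eq_univer_Z[OF q r, of pt]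
    by (simp add: sum_diff1 Z_def deficit_def)
  finally show ?thesis
    using redistributed by (simp add: accept_t)
qed

lemma is_dist_Ms_neg:
  assumes "is_dist P" "(\<Sum>y\<in>-H. P y) > 0"
  shows "is_dist (Ms_neg P H)"
proof -
  have "(\<Sum>x\<in>UNIV. Ms_neg P H x) = (\<Sum>x\<in>-H. P x / (\<Sum>y\<in>-H. P y))"
    by (rule sum.mono_neutral_cong_right) (auto simp: Ms_neg_def)
  also have "\<dots> = 1"
    using assms(2) by (simp add: sum_divide_distrib[symmetric])
  finally show ?thesis
    using assms by (simp add: is_dist_def Ms_neg_def)
qed

text \<open>Losslessness holds for every excluded set \<open>H\<close>.\<close>

theorem theorem3:
  fixes Mb Ms :: "'a::finite list \<Rightarrow> 'a \<Rightarrow> real"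
    and v :: "'a list" and m :: nat and H :: "'a set" and pt :: real and t :: 'a
  assumes "\<forall>c. is_dist (Mb c)"
    and "\<forall>c. is_dist (Ms c)"
    and "1 \<le> m"
    and "top_set (Ms v) (m - 1) H"
    and "(\<Sum>y\<in>-H. Ms v y) > 0"
    and "0 \<le> pt" and "pt \<le> 1"
  shows "(\<Sum>um\<in>UNIV. Ms_neg (Ms v) H um * univer_p pt (Mb v) (Ms_neg (Ms v) H) um t)
         = pt * Mb v t"
proof (rule univer_p_lossless)
  show "is_dist (Ms_neg (Ms v) H)"
    using assms(2,5) by (simp add: is_dist_Ms_neg)
qed (use assms in auto)

end
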